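(* Let $\alpha\in(0,0.4701)$ and let $c^{(\alpha)}_{i,k}$ be the L1-2 coefficients defined in the context. Then, for sufficiently small temporal stepsize $\tau$, $$\frac{1}{c^{(\alpha)}_{1,k}}<C^{(\alpha)}(k\tau)^{\alpha},\qquad k\ge1,$$ where $C^{(\alpha)}=\max\Big\{\frac{6\Gamma(1-\alpha)}{\tilde a^{\alpha}},\frac{3\Gamma(2-\alpha)}{\alpha\,\tilde a^{\alpha}}\Big\}$.
   Context: Let $\tilde a>0$, $T>\tilde a$, $N\in\mathbb{Z}^+$, $\tau=(T-\tilde a)/N$, $t_k=\tilde a+k\tau$ ($k=0,\dots,N$). Define $a^{(\alpha)}_{i,k}=\big(\log\frac{t_k}{t_{i-1}}\big)^{1-\alpha}-\big(\log\frac{t_k}{t_i}\big)^{1-\alpha}$ and, for $i\ge2$, $$b^{(\alpha)}_{i,k}=\frac{1}{\log\frac{t_i}{t_{i-2}}}\Big\{\log\tfrac{t_i}{t_{i-1}}\Big[\Big(\log\tfrac{t_k}{t_i}\Big)^{1-\alpha}+\Big(\log\tfrac{t_k}{t_{i-1}}\Big)^{1-\alpha}\Big]+\tfrac{2}{2-\alpha}\Big[\Big(\log\tfrac{t_k}{t_i}\Big)^{2-\alpha}-\Big(\log\tfrac{t_k}{t_{i-1}}\Big)^{2-\alpha}\Big]\Big\}.$$ The coefficients are: $c^{(\alpha)}_{1,1}=\frac{a^{(\alpha)}_{1,1}}{\Gamma(2-\alpha)\log\frac{t_1}{t_0}}$; for $k=2$: $c^{(\alpha)}_{1,2}=\frac{a^{(\alpha)}_{1,2}+b^{(\alpha)}_{2,2}}{\Gamma(2-\alpha)\log\frac{t_1}{t_0}}$,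 $c^{(\alpha)}_{2,2}=\frac{a^{(\alpha)}_{2,2}-b^{(\alpha)}_{2,2}}{\Gamma(2-\alpha)\log\frac{t_2}{t_1}}$; for $k\ge3$: $c^{(\alpha)}_{1,k}=\frac{a^{(\alpha)}_{1,k}+b^{(\alpha)}_{2,k}}{\Gamma(2-\alpha)\log\frac{t_1}{t_0}}$, $c^{(\alpha)}_{i,k}=\frac{a^{(\alpha)}_{i,k}-b^{(\alpha)}_{i,k}+b^{(\alpha)}_{i+1,k}}{\Gamma(2-\alpha)\log\frac{t_i}{t_{i-1}}}$ for $2\le i\le k-1$, and $c^{(\alpha)}_{k,k}=\frac{a^{(\alpha)}_{k,k}-b^{(\alpha)}_{k,k}}{\Gamma(2-\alpha)\log\frac{t_k}{t_{k-1}}}$. *)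

theory Defs
  imports "HOL-Analysis.Analysis"
begin

definition grid :: "real \<Rightarrow> real \<Rightarrow> nat \<Rightarrow> nat \<Rightarrow> real" where
  "grid a T N k = a + real k * ((T - a) / real N)"

definition a_coef :: "real \<Rightarrow> (nat \<Rightarrow> real) \<Rightarrow> nat \<Rightarrow> nat \<Rightarrow> real" where
  "a_coef \<alpha> t i k = ln (t k / t (i - 1)) powr (1 - \<alpha>) - ln (t k / t i) powr (1 - \<alpha>)"

definition b_coef :: "real \<Rightarrow> (nat \<Rightarrow> real) \<Rightarrow> nat \<Rightarrow> nat \<Rightarrow> real" where
  "b_coef \<alpha> t i k = (1 / ln (t i / t (i - 2))) *
     (ln (t i / t (i - 1)) * (ln (t k / t i) powr (1 - \<alpha>) + ln (t k / t (i - 1)) powr (1 - \<alpha>))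
      + 2 / (2 - \<alpha>) * (ln (t k / t i) powr (2 - \<alpha>) - ln (t k / t (i - 1)) powr (2 - \<alpha>)))"

text \<open>L1-2 coefficients c_{i,k} (meaningful for 1 <= i <= k).\<close>
definition c_coef :: "real \<Rightarrow> (nat \<Rightarrow> real) \<Rightarrow> nat \<Rightarrow> nat \<Rightarrow> real" where
  "c_coef \<alpha> t i k =
    (if k = 1 then a_coef \<alpha> t 1 1 / (Gamma (2 - \<alpha>) * ln (t 1 / t 0))
     else if i = 1 then (a_coef \<alpha> t 1 k + b_coef \<alpha> t 2 k) / (Gamma (2 - \<alpha>) * ln (t 1 / t 0))
     else if i = k then (a_coef \<alpha> t k k - b_coef \<alpha> t k k) / (Gamma (2 - \<alpha>) * ln (t k / t (k - 1)))
     else (a_coef \<alpha> t i k - b_coef \<alpha> t i k + b_coef \<alpha> t (i + 1) k) / (Gamma (2 - \<alpha>) * ln (t i / t (i - 1))))"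

definition C_const :: "real \<Rightarrow> real \<Rightarrow> real" where
  "C_const \<alpha> a = max (6 * Gamma (1 - \<alpha>) / a powr \<alpha>) (3 * Gamma (2 - \<alpha>) / (\<alpha> * a powr \<alpha>))"

end

theory Submission
  imports Defs
begin

text \<open>
  In the logarithmic variables \<open>x = ln (t k / t 0)\<close>, \<open>y = ln (t k / t 1)\<close> and
  \<open>z = ln (t k / t 2)\<close>, the numerator \<open>a_coef \<alpha> t 1 k + b_coef \<alpha> t 2 k\<close> of
  \<open>c_coef \<alpha> t 1 k\<close> is \<open>x powr (1 - \<alpha>) - y powr (1 - \<alpha>)\<close> minus \<open>2 / (x - z)\<close> times the
  error of the trapezoidal rule for the integral of \<open>s powr (1 - \<alpha>)\<close> over \<open>[z, y]\<close>.
  Concavity bounds the first part below by \<open>R = (1 - \<alpha>) * x powr (- \<alpha>) * (x - y)\<close>, and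
  for \<open>\<alpha> \<le> 1/2\<close> the trapezoidal correction costs at most \<open>5/6 * R\<close>: it is computed
  exactly when \<open>z = 0\<close> (that is \<open>k = 2\<close>), and otherwise controlled by the
  second-derivative error bound, because on a uniform grid with \<open>\<tau> \<le> a / 2\<close>
  consecutive logarithmic steps differ by at most a factor 2. Hence
  \<open>1 / c_coef \<alpha> t 1 k \<le> 6 * Gamma (1 - \<alpha>) * x powr \<alpha>\<close>, and \<open>x = ln (1 + k \<tau> / a) < k \<tau> / a\<close>.
\<close>

lemma powr_diff_mean_value:
  fixes y z p :: real
  assumes "0 < z" "z \<le> y"
  obtains \<xi> where "z \<le> \<xi>" "\<xi> \<le> y" "y powr p - z powr p = p * \<xi> powr (p - 1) * (y - z)"
proof (cases "z = y")
  case False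
  then have "z < y" using assms(2) by simp
  moreover have "\<And>s. z \<le> s \<Longrightarrow> s \<le> y \<Longrightarrow> DERIV (\<lambda>s. s powr p) s :> p * s powr (p - 1)"
    using assms(1) by (intro has_real_derivative_powr) simp
  ultimately obtain \<xi> where "z < \<xi>" "\<xi> < y" "y powr p - z powr p = (y - z) * (p * \<xi> powr (p - 1))"
    using MVT2[of z y "\<lambda>s. s powr p" "\<lambda>s. p * s powr (p - 1)"] by auto
  then show ?thesis by (intro that[of \<xi>]) (simp_all add: ac_simps)
qed (use that in simp)

lemma powr_diff_ge_concave:
  fixes y z p :: real
  assumes "0 < z" "z \<le> y" "0 \<le> p" "p \<le> 1"
  shows "p * y powr (p - 1) * (y - z) \<le> y powr p - z powr p"
proof -
  obtain \<xi> where \<xi>: "z \<le> \<xi>" "\<xi> \<le> y" "y powr p - z powr p = p * \<xi> powr (p - 1) * (y - z)"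
    using powr_diff_mean_value assms(1,2) by blast
  have "y powr (p - 1) \<le> \<xi> powr (p - 1)"
    using powr_mono2' \<xi> assms by simp
  then show ?thesis
    unfolding \<xi>(3) using assms by (intro mult_right_mono mult_left_mono) simp_all
qed

lemma powr_diff_le_concave:
  fixes y z p :: real
  assumes "0 < z" "z \<le> y" "0 \<le> p" "p \<le> 1"
  shows "y powr p - z powr p \<le> p * z powr (p - 1) * (y - z)"
proof -
  obtain \<xi> where \<xi>: "z \<le> \<xi>" "\<xi> \<le> y" "y powr p - z powr p = p * \<xi> powr (p - 1) * (y - z)"
    using powr_diff_mean_value assms(1,2) by blast
  have "\<xi> powr (p - 1) \<le> z powr (p - 1)"
    using powr_mono2' \<xi> assms by simp
  then show ?thesis
    unfolding \<xi>(3) using assms by (intro mult_right_mono mult_left_mono) simp_all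
qed

lemma powr_diff_ge_convex:
  fixes y z p :: real
  assumes "0 < z" "z \<le> y" "p \<le> 0"
  shows "p * z powr (p - 1) * (y - z) \<le> y powr p - z powr p"
proof -
  obtain \<xi> where \<xi>: "z \<le> \<xi>" "\<xi> \<le> y" "y powr p - z powr p = p * \<xi> powr (p - 1) * (y - z)"
    using powr_diff_mean_value assms(1,2) by blast
  have "\<xi> powr (p - 1) \<le> z powr (p - 1)"
    using powr_mono2' \<xi> assms by simp
  then show ?thesis
    unfolding \<xi>(3) using assms by (intro mult_right_mono mult_left_mono_neg) simp_all
qed

definition trapezoid_error :: "real \<Rightarrow> real \<Rightarrow> real \<Rightarrow> real" where
  "trapezoid_error \<alpha> z y =
     (y powr (2 - \<alpha>) - z powr (2 - \<alpha>)) / (2 - \<alpha>) - (y - z) * (y powr (1 - \<alpha>) + z powr (1 - \<alpha>)) / 2"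

lemma trapezoid_error_le:
  fixes y z \<alpha> :: real
  assumes "0 < z" "z \<le> y" "0 < \<alpha>" "\<alpha> < 1"
  shows "trapezoid_error \<alpha> z y \<le> (1 - \<alpha>) * \<alpha> * z powr (- \<alpha> - 1) * (y - z) ^ 3 / 6"
proof -
  define K where "K = (1 - \<alpha>) * \<alpha> * z powr (- \<alpha> - 1)"
  define f where "f s = K * (s - z) ^ 3 / 6 - trapezoid_error \<alpha> z s" for s
  have "f z \<le> f y"
  proof (rule DERIV_nonneg_imp_nondecreasing[OF assms(2)])
    fix s assume s: "z \<le> s" "s \<le> y"
    \<comment> \<open>\<open>D / 2\<close> is the derivative of the trapezoidal error in its upper limit.\<close>
    define D where "D = (s powr (1 - \<alpha>) - z powr (1 - \<alpha>)) - (1 - \<alpha>) * (s - z) * s powr (- \<alpha>)"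
    have "DERIV f s :> (K * (s - z) ^ 2 - D) / 2"
      unfolding f_def trapezoid_error_def D_def using s assms
      by (auto intro!: derivative_eq_intros)
    moreover have "D \<le> K * (s - z) ^ 2"
    proof -
      have "D \<le> (1 - \<alpha>) * (s - z) * (z powr (- \<alpha>) - s powr (- \<alpha>))"
        using powr_diff_le_concave[of z s "1 - \<alpha>"] s assms unfolding D_def
        by (simp add: algebra_simps)
      also have "\<dots> \<le> (1 - \<alpha>) * (s - z) * (\<alpha> * z powr (- \<alpha> - 1) * (s - z))"
      proof -
        have "z powr (- \<alpha>) - s powr (- \<alpha>) \<le> \<alpha> * z powr (- \<alpha> - 1) * (s - z)"
          using powr_diff_ge_convex[of z s "- \<alpha>"] s assms by (simp add: algebra_simps)
        then show ?thesis using s assms by (intro mult_left_mono) simp_all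
      qed
      also have "\<dots> = K * (s - z) ^ 2"
        unfolding K_def by (simp add: power2_eq_square)
      finally show ?thesis .
    qed
    ultimately show "\<exists>d. DERIV f s :> d \<and> 0 \<le> d" by auto
  qed
  then show ?thesis unfolding f_def K_def by (simp add: trapezoid_error_def)
qed

lemma trapezoid_error_zero_left:
  fixes y \<alpha> :: real
  assumes "0 < y" "\<alpha> < 2"
  shows "2 * trapezoid_error \<alpha> 0 y = \<alpha> / (2 - \<alpha>) * y powr (2 - \<alpha>)"
proof -
  have "y powr (2 - \<alpha>) = y * y powr (1 - \<alpha>)"
    using assms powr_add[of y 1 "1 - \<alpha>"] by simp
  then show ?thesis
    unfolding trapezoid_error_def using assms by (simp add: field_simps)
qed

lemma trapezoid_error_zero_left_div_le:
  fixes x y \<alpha> :: real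
  assumes "0 < y" "2 * y \<le> x" "0 < \<alpha>" "\<alpha> \<le> 1/2"
  shows "2 * trapezoid_error \<alpha> 0 y / x \<le> 5/6 * ((1 - \<alpha>) * x powr (- \<alpha>) * (x - y))"
proof -
  have x: "0 < x" using assms by simp
  have "y powr (1 - \<alpha>) \<le> x powr (1 - \<alpha>)"
    using assms by (intro powr_mono2) simp_all
  also have "\<dots> = x * x powr (- \<alpha>)"
    using x powr_add[of x 1 "- \<alpha>"] by simp
  finally have "y powr (1 - \<alpha>) / x \<le> x powr (- \<alpha>)"
    using x by (simp add: divide_simps mult.commute)
  have "2 * trapezoid_error \<alpha> 0 y / x = \<alpha> / (2 - \<alpha>) * y powr (2 - \<alpha>) / x"
    using trapezoid_error_zero_left[of y \<alpha>] assms by simp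
  also have "\<dots> = \<alpha> / (2 - \<alpha>) * y * (y powr (1 - \<alpha>) / x)"
    using powr_add[of y 1 "1 - \<alpha>"] assms by simp
  also have "\<dots> \<le> \<alpha> / (2 - \<alpha>) * (x - y) * x powr (- \<alpha>)"
    using \<open>y powr (1 - \<alpha>) / x \<le> x powr (- \<alpha>)\<close> assms
    by (intro mult_mono) simp_all
  also have "\<dots> \<le> 5/6 * ((1 - \<alpha>) * x powr (- \<alpha>) * (x - y))"
  proof -
    have "\<alpha> / (2 - \<alpha>) \<le> 1/3"
      using assms by (simp add: divide_simps)
    also have "\<dots> \<le> 5/6 * (1 - \<alpha>)"
      using assms by simp
    finally have "\<alpha> / (2 - \<alpha>) \<le> 5/6 * (1 - \<alpha>)" .
    moreover have "0 \<le> (x - y) * x powr (- \<alpha>)" using assms by simp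
    ultimately have "\<alpha> / (2 - \<alpha>) * ((x - y) * x powr (- \<alpha>))
                       \<le> 5/6 * (1 - \<alpha>) * ((x - y) * x powr (- \<alpha>))"
      by (rule mult_right_mono)
    then show ?thesis by (simp only: mult_ac)
  qed
  finally show ?thesis .
qed

lemma powr_neg_le_three_mul:
  fixes x z \<alpha> :: real
  assumes "0 < x" "x \<le> 7 * z" "0 \<le> \<alpha>" "\<alpha> \<le> 1/2"
  shows "z powr (- \<alpha>) \<le> 3 * x powr (- \<alpha>)"
proof -
  have "7 powr \<alpha> \<le> 7 powr (1/2)"
    using assms by (intro powr_mono) simp_all
  also have "\<dots> \<le> 3"
    by (simp add: powr_half_sqrt real_le_lsqrt)
  finally have "7 powr \<alpha> \<le> 3" .
  have "x powr \<alpha> \<le> (7 * z) powr \<alpha>"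
    using assms by (intro powr_mono2) simp_all
  also have "\<dots> = 7 powr \<alpha> * z powr \<alpha>"
    using assms by (simp add: powr_mult)
  also have "\<dots> \<le> 3 * z powr \<alpha>"
    using \<open>7 powr \<alpha> \<le> 3\<close> by (intro mult_right_mono) simp_all
  finally have "x powr \<alpha> \<le> 3 * z powr \<alpha>" .
  then show ?thesis
    using assms by (simp add: powr_minus divide_simps mult.commute)
qed

lemma trapezoid_error_div_le:
  fixes x y z \<alpha> :: real
  assumes "0 < z" "z < y" "y - z \<le> x - y" "x - y \<le> 2 * (y - z)" "y - z \<le> 2 * z"
    and "0 < \<alpha>" "\<alpha> \<le> 1/2"
  shows "2 * trapezoid_error \<alpha> z y / (x - z) \<le> 5/6 * ((1 - \<alpha>) * x powr (- \<alpha>) * (x - y))"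
proof -
  define Q where "Q = (1 - \<alpha>) * \<alpha> * z powr (- \<alpha> - 1) * (y - z) ^ 3 / 6"
  have "0 \<le> Q" unfolding Q_def using assms by simp
  have "2 * trapezoid_error \<alpha> z y / (x - z) \<le> 2 * Q / (x - z)"
    using trapezoid_error_le[of z y \<alpha>] assms unfolding Q_def[symmetric]
    by (intro divide_right_mono) simp_all
  also have "\<dots> \<le> Q / (y - z)"
  proof -
    have "Q * (2 * (y - z)) \<le> Q * (x - z)"
      using \<open>0 \<le> Q\<close> assms by (intro mult_left_mono) simp_all
    then show ?thesis using assms by (simp add: divide_simps ac_simps)
  qed
  also have "\<dots> = (1 - \<alpha>) * \<alpha> * z powr (- \<alpha>) * ((y - z) ^ 2 / z) / 6"
    using powr_diff[of z "- \<alpha>" 1] assms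
    by (simp add: Q_def power2_eq_square power3_eq_cube)
  also have "\<dots> \<le> (1 - \<alpha>) * \<alpha> * z powr (- \<alpha>) * (2 * (x - y)) / 6"
  proof -
    have "(y - z) * (y - z) \<le> (2 * z) * (x - y)"
      using assms by (intro mult_mono) simp_all
    then have "(y - z) ^ 2 / z \<le> 2 * (x - y)"
      using assms by (simp add: power2_eq_square field_simps)
    then show ?thesis using assms by (intro divide_right_mono mult_left_mono) simp_all
  qed
  also have "\<dots> = (1 - \<alpha>) * (x - y) * (\<alpha> * z powr (- \<alpha>) / 3)"
    by (simp add: field_simps)
  also have "\<dots> \<le> (1 - \<alpha>) * (x - y) * (5/6 * x powr (- \<alpha>))"
  proof -
    have "\<alpha> * z powr (- \<alpha>) / 3 \<le> \<alpha> * x powr (- \<alpha>)"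
      using powr_neg_le_three_mul[of x z \<alpha>] assms by simp
    also have "\<dots> \<le> 5/6 * x powr (- \<alpha>)"
      using assms by (intro mult_right_mono) simp_all
    finally show ?thesis using assms by (intro mult_left_mono) simp_all
  qed
  also have "\<dots> = 5/6 * ((1 - \<alpha>) * x powr (- \<alpha>) * (x - y))"
    by (simp add: field_simps)
  finally show ?thesis .
qed

lemma powr_diff_minus_trapezoid_ge:
  fixes x y z \<alpha> :: real
  assumes "0 \<le> z" "z < y" "y - z \<le> x - y" "z = 0 \<or> (x - y \<le> 2 * (y - z) \<and> y - z \<le> 2 * z)"
    and "0 < \<alpha>" "\<alpha> \<le> 1/2"
  shows "(1 - \<alpha>) / 6 * x powr (- \<alpha>) * (x - y)
           \<le> x powr (1 - \<alpha>) - y powr (1 - \<alpha>) - 2 * trapezoid_error \<alpha> z y / (x - z)"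
proof -
  define R where "R = (1 - \<alpha>) * x powr (- \<alpha>) * (x - y)"
  have "R \<le> x powr (1 - \<alpha>) - y powr (1 - \<alpha>)"
    using powr_diff_ge_concave[of y x "1 - \<alpha>"] assms unfolding R_def by simp
  moreover have "2 * trapezoid_error \<alpha> z y / (x - z) \<le> 5/6 * R"
    using assms trapezoid_error_zero_left_div_le[of y x \<alpha>] trapezoid_error_div_le[of z y x \<alpha>]
    unfolding R_def by fastforce
  ultimately show ?thesis unfolding R_def by simp
qed

lemma Gamma_two_minus:
  fixes \<alpha> :: real
  assumes "\<alpha> < 1"
  shows "Gamma (2 - \<alpha>) = (1 - \<alpha>) * Gamma (1 - \<alpha>)"
proof -
  have "1 - \<alpha> \<notin> \<int>\<^sub>\<le>\<^sub>0" using assms nonpos_Ints_nonpos by fastforce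
  then show ?thesis using Gamma_plus1[of "1 - \<alpha>"] by simp
qed

lemma a_coef_plus_b_coef_eq:
  fixes \<alpha> :: real and t :: "nat \<Rightarrow> real" and k :: nat
  assumes "\<And>j. 0 < t j"
  defines "x \<equiv> ln (t k / t 0)" and "y \<equiv> ln (t k / t 1)" and "z \<equiv> ln (t k / t 2)"
  shows "a_coef \<alpha> t 1 k + b_coef \<alpha> t 2 k
           = x powr (1 - \<alpha>) - y powr (1 - \<alpha>) - 2 * trapezoid_error \<alpha> z y / (x - z)"
proof -
  have ln_ratio: "ln (t i / t j) = ln (t k / t j) - ln (t k / t i)" for i j
    using assms(1)[of i] assms(1)[of j] assms(1)[of k] by (simp add: ln_div)
  have "b_coef \<alpha> t 2 k = 1 / ln (t 2 / t 0) *
          (ln (t 2 / t 1) * (z powr (1 - \<alpha>) + y powr (1 - \<alpha>))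
           + 2 / (2 - \<alpha>) * (z powr (2 - \<alpha>) - y powr (2 - \<alpha>)))"
    unfolding b_coef_def y_def z_def by simp
  also have "\<dots> = 1 / (x - z) *
          ((y - z) * (z powr (1 - \<alpha>) + y powr (1 - \<alpha>))
           + 2 / (2 - \<alpha>) * (z powr (2 - \<alpha>) - y powr (2 - \<alpha>)))"
    unfolding ln_ratio[of 2 0] ln_ratio[of 2 1] x_def y_def z_def ..
  also have "\<dots> = - 2 * trapezoid_error \<alpha> z y / (x - z)"
  proof -
    have "- 2 * trapezoid_error \<alpha> z y
            = (y - z) * (z powr (1 - \<alpha>) + y powr (1 - \<alpha>))
              + 2 / (2 - \<alpha>) * (z powr (2 - \<alpha>) - y powr (2 - \<alpha>))"
      unfolding trapezoid_error_def by (simp add: algebra_simps diff_divide_distrib)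
    then show ?thesis by simp
  qed
  finally show ?thesis unfolding a_coef_def x_def y_def by simp
qed

lemma a_coef_plus_b_coef_ge:
  fixes \<alpha> :: real and t :: "nat \<Rightarrow> real" and k :: nat
  assumes mono: "strict_mono t" and pos: "0 < t 0"
    and steps: "ln (t 2 / t 1) \<le> ln (t 1 / t 0)" "ln (t 1 / t 0) \<le> 2 * ln (t 2 / t 1)"
      "ln (t 2 / t 1) \<le> 2 * ln (t 3 / t 2)"
    and \<alpha>: "0 < \<alpha>" "\<alpha> \<le> 1/2" and k: "2 \<le> k"
  shows "(1 - \<alpha>) / 6 * ln (t k / t 0) powr (- \<alpha>) * ln (t 1 / t 0)
           \<le> a_coef \<alpha> t 1 k + b_coef \<alpha> t 2 k"
proof -
  have t_pos: "0 < t j" for j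
    using pos strict_mono_less_eq[OF mono, of 0 j] by simp
  define x where "x = ln (t k / t 0)"
  define y where "y = ln (t k / t 1)"
  define z where "z = ln (t k / t 2)"
  have ln_ratio: "ln (t i / t j) = ln (t k / t j) - ln (t k / t i)" for i j
    using t_pos[of i] t_pos[of j] t_pos[of k] by (simp add: ln_div)
  have xy: "x - y = ln (t 1 / t 0)" and yz: "y - z = ln (t 2 / t 1)"
    unfolding x_def y_def z_def ln_ratio[of 1 0] ln_ratio[of 2 1] by simp_all
  have "0 \<le> z"
    using t_pos[of 2] strict_mono_less_eq[OF mono, of 2 k] k unfolding z_def by simp
  have "0 < ln (t 2 / t 1)"
    using t_pos[of 1] strict_monoD[OF mono, of 1 2] by simp
  then have "z < y"
    using yz by simp
  have "z = 0 \<or> ln (t 3 / t 2) \<le> z"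
  proof (cases "k = 2")
    case False
    then have "t 3 / t 2 \<le> t k / t 2"
      using k t_pos[of 2] strict_mono_less_eq[OF mono, of 3 k] by (intro divide_right_mono) simp_all
    then show ?thesis using t_pos unfolding z_def by simp
  qed (simp add: z_def)
  then have "z = 0 \<or> (x - y \<le> 2 * (y - z) \<and> y - z \<le> 2 * z)"
    using steps unfolding xy yz by auto
  then have "(1 - \<alpha>) / 6 * x powr (- \<alpha>) * (x - y)
               \<le> x powr (1 - \<alpha>) - y powr (1 - \<alpha>) - 2 * trapezoid_error \<alpha> z y / (x - z)"
    using \<open>0 \<le> z\<close> \<open>z < y\<close> steps(1)[folded xy yz] \<alpha> by (intro powr_diff_minus_trapezoid_ge)
  then show ?thesis
    using a_coef_plus_b_coef_eq[OF t_pos, where \<alpha> = \<alpha> and k = k] xy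
    unfolding x_def y_def z_def by simp
qed

lemma inverse_c_coef_first_le:
  fixes \<alpha> :: real and t :: "nat \<Rightarrow> real" and k :: nat
  assumes mono: "strict_mono t" and pos: "0 < t 0"
    and steps: "ln (t 2 / t 1) \<le> ln (t 1 / t 0)" "ln (t 1 / t 0) \<le> 2 * ln (t 2 / t 1)"
      "ln (t 2 / t 1) \<le> 2 * ln (t 3 / t 2)"
    and \<alpha>: "0 < \<alpha>" "\<alpha> \<le> 1/2" and k: "1 \<le> k"
  shows "1 / c_coef \<alpha> t 1 k \<le> 6 * Gamma (1 - \<alpha>) * ln (t k / t 0) powr \<alpha>"
proof -
  have ln_pos: "0 < ln (t j / t i)" if "i < j" for i j
    using pos strict_mono_less_eq[OF mono, of 0 i] strict_monoD[OF mono that] by simp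
  define x where "x = ln (t k / t 0)"
  define h where "h = ln (t 1 / t 0)"
  define S where "S = (if k = 1 then a_coef \<alpha> t 1 1 else a_coef \<alpha> t 1 k + b_coef \<alpha> t 2 k)"
  have x: "0 < x" and h: "0 < h" using ln_pos k unfolding x_def h_def by simp_all
  have c: "c_coef \<alpha> t 1 k = S / (Gamma (2 - \<alpha>) * h)"
    unfolding c_coef_def S_def h_def by simp
  have S: "(1 - \<alpha>) / 6 * x powr (- \<alpha>) * h \<le> S"
  proof (cases "k = 1")
    case True
    have "(1 - \<alpha>) / 6 * x powr (- \<alpha>) * h \<le> x powr (- \<alpha>) * x"
      using \<alpha> x unfolding True x_def h_def by simp
    also have "\<dots> = S"
      using powr_add[of x "- \<alpha>" 1] x unfolding S_def True a_coef_def x_def by simp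
    finally show ?thesis .
  next
    case False
    then show ?thesis
      using a_coef_plus_b_coef_ge[OF mono pos steps \<alpha>, of k] k unfolding S_def x_def h_def by simp
  qed
  have "0 < (1 - \<alpha>) / 6 * x powr (- \<alpha>) * h"
    using \<alpha> x h by simp
  have "\<alpha> < 1"
    using \<alpha> by simp
  have "1 / c_coef \<alpha> t 1 k = Gamma (2 - \<alpha>) * h / S"
    unfolding c by simp
  also have "\<dots> \<le> Gamma (2 - \<alpha>) * h / ((1 - \<alpha>) / 6 * x powr (- \<alpha>) * h)"
    using S \<open>0 < (1 - \<alpha>) / 6 * x powr (- \<alpha>) * h\<close> Gamma_real_pos[of "2 - \<alpha>"] \<alpha> h
    by (intro divide_left_mono) simp_all
  also have "\<dots> = 6 * Gamma (1 - \<alpha>) * x powr \<alpha>"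
    unfolding Gamma_two_minus[OF \<open>\<alpha> < 1\<close>] using \<alpha> h x by (simp add: powr_minus field_simps)
  finally show ?thesis unfolding x_def .
qed

lemma ln_ratio_bounds:
  fixes p \<tau> :: real
  assumes "0 < p" "0 < \<tau>"
  shows "\<tau> / (p + \<tau>) \<le> ln ((p + \<tau>) / p)" "ln ((p + \<tau>) / p) \<le> \<tau> / p"
  using ln_diff_le[of p "p + \<tau>"] ln_diff_le[of "p + \<tau>" p] assms
  by (simp_all add: ln_div)

lemma ln_ratio_step_antimono:
  fixes p \<tau> :: real
  assumes "0 < p" "0 \<le> \<tau>"
  shows "ln ((p + 2 * \<tau>) / (p + \<tau>)) \<le> ln ((p + \<tau>) / p)"
proof -
  have "(p + 2 * \<tau>) * p \<le> (p + \<tau>) * (p + \<tau>)"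
    by (simp add: algebra_simps)
  then show ?thesis using assms by (simp add: divide_simps)
qed

lemma ln_ratio_step_le_double_next:
  fixes p \<tau> :: real
  assumes "0 < p" "0 < \<tau>" "2 * \<tau> \<le> p"
  shows "ln ((p + \<tau>) / p) \<le> 2 * ln ((p + 2 * \<tau>) / (p + \<tau>))"
proof -
  have "ln ((p + \<tau>) / p) \<le> \<tau> / p"
    using ln_ratio_bounds assms by simp
  also have "\<dots> \<le> 2 * (\<tau> / (p + 2 * \<tau>))"
    using assms by (simp add: divide_simps)
  also have "\<dots> \<le> 2 * ln ((p + 2 * \<tau>) / (p + \<tau>))"
    using ln_ratio_bounds(1)[of "p + \<tau>" \<tau>] assms by (simp add: add.assoc)
  finally show ?thesis .
qed

lemma arith_progression_log_steps:
  fixes a \<tau> :: real and t :: "nat \<Rightarrow> real"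
  assumes "0 < a" "0 < \<tau>" "\<tau> \<le> a / 2" and t: "\<And>j. t j = a + real j * \<tau>"
  shows "strict_mono t" "0 < t 0"
    "ln (t 2 / t 1) \<le> ln (t 1 / t 0)" "ln (t 1 / t 0) \<le> 2 * ln (t 2 / t 1)"
    "ln (t 2 / t 1) \<le> 2 * ln (t 3 / t 2)"
proof -
  have t123: "t 0 = a" "t 1 = a + \<tau>" "t 2 = a + 2 * \<tau>" "t 3 = (a + \<tau>) + 2 * \<tau>"
    unfolding t by simp_all
  show "strict_mono t" "0 < t 0"
    unfolding strict_mono_def t using assms by simp_all
  show "ln (t 2 / t 1) \<le> ln (t 1 / t 0)"
    unfolding t123 using ln_ratio_step_antimono assms by simp
  show "ln (t 1 / t 0) \<le> 2 * ln (t 2 / t 1)"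
    unfolding t123 using ln_ratio_step_le_double_next assms by simp
  show "ln (t 2 / t 1) \<le> 2 * ln (t 3 / t 2)"
    unfolding t123 using ln_ratio_step_le_double_next[of "a + \<tau>" \<tau>] assms
    by (simp add: add.assoc)
qed

theorem lemma2p6:
  fixes a T \<alpha> :: real
  assumes "0 < a" and "a < T" and "0 < \<alpha>" and "\<alpha> < 0.4701"
  shows "\<exists>\<tau>0 > 0. \<forall>N::nat. N > 0 \<longrightarrow> (T - a) / real N < \<tau>0 \<longrightarrow>
           (\<forall>k. 1 \<le> k \<and> k \<le> N \<longrightarrow>
              1 / c_coef \<alpha> (grid a T N) 1 k < C_const \<alpha> a * (real k * ((T - a) / real N)) powr \<alpha>)"
proof (intro exI[of _ "a / 2"] conjI allI impI)
  show "0 < a / 2" using assms by simp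
  fix N k :: nat
  assume "0 < N" "(T - a) / real N < a / 2" and k: "1 \<le> k \<and> k \<le> N"
  define \<tau> where "\<tau> = (T - a) / real N"
  define t where "t = grid a T N"
  have \<tau>: "0 < \<tau>" "\<tau> \<le> a / 2" and t: "\<And>j. t j = a + real j * \<tau>"
    using \<open>0 < N\<close> \<open>(T - a) / real N < a / 2\<close> assms unfolding \<tau>_def t_def grid_def by simp_all
  define x where "x = ln (t k / t 0)"
  have "t k / t 0 = 1 + real k * \<tau> / a"
    unfolding t using assms by (simp add: add_divide_distrib)
  moreover have "0 < real k * \<tau> / a"
    using k \<tau> assms by simp
  ultimately have x: "0 < x" "x < real k * \<tau> / a"
    using ln_add_one_self_less_self unfolding x_def by simp_all
  have "1 / c_coef \<alpha> t 1 k \<le> 6 * Gamma (1 - \<alpha>) * x powr \<alpha>"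
    unfolding x_def using arith_progression_log_steps[OF assms(1) \<tau> t] assms k
    by (intro inverse_c_coef_first_le) simp_all
  also have "\<dots> < 6 * Gamma (1 - \<alpha>) * (real k * \<tau> / a) powr \<alpha>"
    using x assms Gamma_real_pos[of "1 - \<alpha>"] by (intro mult_strict_left_mono powr_less_mono2) simp_all
  also have "\<dots> = 6 * Gamma (1 - \<alpha>) / a powr \<alpha> * (real k * \<tau>) powr \<alpha>"
    using \<tau> assms by (simp add: powr_divide)
  also have "\<dots> \<le> C_const \<alpha> a * (real k * \<tau>) powr \<alpha>"
    unfolding C_const_def by (intro mult_right_mono) simp_all
  finally show "1 / c_coef \<alpha> (grid a T N) 1 k < C_const \<alpha> a * (real k * ((T - a) / real N)) powr \<alpha>"
    unfolding t_def \<tau>_def .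
qed

end
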